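(* Let $\Delta>0$ and $B\ge0$. Suppose outcomes are observed under a balanced $K$-cluster randomized design $\mathcal{D}(\mathcal{C})$ and the potential outcomes have the form $Y_i(\mathbf{Z})=g_i(Z_i,e_i(\mathbf{Z}))$ where for all $i$, all $Z\in\{-1,1\}$ and all $e\in[-1,1]$: $|g_i(Z,e)-g_i(Z,Z)|=0$ if $|Z-e|<\Delta$, and $|g_i(Z,e)-g_i(Z,Z)|\le B$ otherwise. Then $$\left|\mathbb{E}[\widehat\tau_{DIM}]-\tau^*\right|\le\frac{2B}{N\Delta}\cdot\frac{K}{K-1}\,\mathcal{H}(\mathcal{C}),$$ where $\tau^*=\frac1N\sum_i\big(g_i(1,1)-g_i(-1,-1)\big)$.
   Context: Setting: $N$ experimental units $[N]$, $M$ interference units $[M]$, weights $w_{is}\ge0$ with $\sum_s w_{is}>0$ for all $i$ and $\sum_i w_{is}>0$ for all $s$. For $\mathbf{Z}\in\{-1,1\}^N$: dose $d_s=\frac{\sum_i w_{is}Z_i}{\sum_i w_{is}}$, exposure $e_i(\mathbf{Z})=\frac{\sum_s w_{is}d_s}{\sum_s w_{is}}\in[-1,1]$. Balanced $K$-cluster randomized design $\mathcal{D}(\mathcal{C})$: $K\ge2$ divides $N$, $\mathcal{C}$ partitions $[N]$ into $K$ clusters of size $N/K$, $\mathcal{C}(i)$ is the cluster of $i$; $K_T$ clusters ($0<K_T<K$) chosen uniformly at random are treated ($Z_i=1$), the rest are control ($Z_i=-1$). $N_T=NK_T/K$, $N_C=N-N_T$; $\widehat\tau_{DIM}=\frac{1}{N_T}\sum_{i:Z_i=1}Y_i-\frac{1}{N_C}\sum_{i:Z_i=-1}Y_i$.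 $\mathcal{H}(\mathcal{C})=\sum_{i\in[N]}\sum_{j\in[N]\setminus\mathcal{C}(i)}\sum_{s\in[M]}\frac{w_{is}}{\sum_{s'} w_{is'}}\frac{w_{js}}{\sum_{k} w_{ks}}$. *)

theory Defs
  imports "HOL-Analysis.Analysis"
begin

text \<open>Experimental units are 0..<N, interference units 0..<M, weights w i s.
  A treatment assignment is Z :: nat => real with values in {-1,1}.\<close>

definition dose :: "nat \<Rightarrow> nat \<Rightarrow> (nat \<Rightarrow> nat \<Rightarrow> real) \<Rightarrow> (nat \<Rightarrow> real) \<Rightarrow> nat \<Rightarrow> real" where
  "dose N M w Z s = (\<Sum>i<N. w i s * Z i) / (\<Sum>i<N. w i s)"

definition exposure :: "nat \<Rightarrow> nat \<Rightarrow> (nat \<Rightarrow> nat \<Rightarrow> real) \<Rightarrow> (nat \<Rightarrow> real) \<Rightarrow> nat \<Rightarrow> real" where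
  "exposure N M w Z i = (\<Sum>s<M. w i s * dose N M w Z s) / (\<Sum>s<M. w i s)"

text \<open>A clustering is given by a labelling cl : [N] -> [K]; cluster C(i) = {j. cl j = cl i}.
  Balanced: every label class has exactly N/K elements.\<close>

definition balanced_clustering :: "nat \<Rightarrow> nat \<Rightarrow> (nat \<Rightarrow> nat) \<Rightarrow> bool" where
  "balanced_clustering N K cl \<longleftrightarrow> K \<ge> 2 \<and> K dvd N \<and> (\<forall>i<N. cl i < K) \<and>
     (\<forall>k<K. card {i\<in>{..<N}. cl i = k} = N div K)"

definition assign :: "(nat \<Rightarrow> nat) \<Rightarrow> nat set \<Rightarrow> nat \<Rightarrow> real" where
  "assign cl T i = (if cl i \<in> T then 1 else -1)"

text \<open>Support of the design D(C): all sets of K_T treated clusters (uniformly distributed).\<close>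
definition treated_sets :: "nat \<Rightarrow> nat \<Rightarrow> nat set set" where
  "treated_sets K KT = {T. T \<subseteq> {..<K} \<and> card T = KT}"

definition tau_dim :: "nat \<Rightarrow> nat \<Rightarrow> nat \<Rightarrow> (nat \<Rightarrow> real) \<Rightarrow> (nat \<Rightarrow> real) \<Rightarrow> real" where
  "tau_dim N K KT Z Y =
     (let NT = real N * real KT / real K; NC = real N - NT in
      (\<Sum>i\<in>{i\<in>{..<N}. Z i = 1}. Y i) / NT - (\<Sum>i\<in>{i\<in>{..<N}. Z i = -1}. Y i) / NC)"

definition expected_dim ::
  "nat \<Rightarrow> nat \<Rightarrow> (nat \<Rightarrow> nat \<Rightarrow> real) \<Rightarrow> nat \<Rightarrow> nat \<Rightarrow> (nat \<Rightarrow> nat) \<Rightarrow> (nat \<Rightarrow> real \<Rightarrow> real \<Rightarrow> real) \<Rightarrow> real" where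
  "expected_dim N M w K KT cl g =
     (\<Sum>T\<in>treated_sets K KT.
        tau_dim N K KT (assign cl T)
          (\<lambda>i. g i (assign cl T i) (exposure N M w (assign cl T) i)))
     / real (card (treated_sets K KT))"

definition tau_star :: "nat \<Rightarrow> (nat \<Rightarrow> real \<Rightarrow> real \<Rightarrow> real) \<Rightarrow> real" where
  "tau_star N g = (\<Sum>i<N. g i 1 1 - g i (-1) (-1)) / real N"

definition H_clust :: "nat \<Rightarrow> nat \<Rightarrow> (nat \<Rightarrow> nat \<Rightarrow> real) \<Rightarrow> (nat \<Rightarrow> nat) \<Rightarrow> real" where
  "H_clust N M w cl =
     (\<Sum>i<N. \<Sum>j\<in>{j\<in>{..<N}. cl j \<noteq> cl i}. \<Sum>s<M.
        (w i s / (\<Sum>s'<M. w i s')) * (w j s / (\<Sum>k<N. w k s)))"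

end

theory Submission
  imports Defs
begin

text \<open>Write the difference-in-means estimator as \<open>\<Sum>i. \<omega>(Z i) * Y i\<close> with the inverse-probability
  weights \<open>\<omega>(1) = 1 / N_T\<close> and \<open>\<omega>(-1) = -1 / N_C\<close>. Each unit is treated with probability
  \<open>K_T / K\<close>, so the interference-free part \<open>\<Sum>i. \<omega>(Z i) * g i (Z i) (Z i)\<close> is unbiased for
  \<open>\<tau>*\<close>, and the bias is the expectation of \<open>\<Sum>i. \<omega>(Z i) * (g i (Z i) (e i) - g i (Z i) (Z i))\<close>.
  The hypotheses on \<open>g\<close> make this term at most \<open>B / \<Delta> * |Z i - e i|\<close> in absolute value, and
  \<open>Z i - e i\<close> is an average of the differences \<open>Z i - Z j\<close>, in which only units \<open>j\<close> outside the
  cluster of \<open>i\<close> contribute. For \<open>i\<close> and \<open>j\<close> in different clusters,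
  \<open>E[|\<omega>(Z i)| * |Z i - Z j|] = 2 K / (N (K - 1))\<close>, which is the factor in front of \<open>H(C)\<close>.\<close>

lemma sum_if_const_eq_card:
  fixes u v :: real
  assumes "finite A"
  shows "(\<Sum>x\<in>A. if P x then u else v) = real (card A) * v + real (card {x \<in> A. P x}) * (u - v)"
proof -
  have "(\<Sum>x\<in>A. if P x then u else v) = (\<Sum>x\<in>A. v + (if P x then u - v else 0))"
    by (rule sum.cong) auto
  also have "\<dots> = real (card A) * v + real (card {x \<in> A. P x}) * (u - v)"
    using assms by (simp add: sum.distrib flip: sum.inter_filter)
  finally show ?thesis .
qed

lemma card_subsets_containing:
  assumes "finite S" "a \<in> S"
  shows "card {T. T \<subseteq> S \<and> card T = Suc k \<and> a \<in> T} = (card S - 1) choose k"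
proof -
  have finite_subsets: "finite U" if "U \<subseteq> S" for U
    using that assms(1) finite_subset by blast
  have "bij_betw (insert a) {U. U \<subseteq> S - {a} \<and> card U = k} {T. T \<subseteq> S \<and> card T = Suc k \<and> a \<in> T}"
  proof (rule bij_betw_byWitness[where f' = "\<lambda>T. T - {a}"])
    show "(\<lambda>T. T - {a}) ` {T. T \<subseteq> S \<and> card T = Suc k \<and> a \<in> T} \<subseteq> {U. U \<subseteq> S - {a} \<and> card U = k}"
      using finite_subsets by auto
    show "insert a ` {U. U \<subseteq> S - {a} \<and> card U = k} \<subseteq> {T. T \<subseteq> S \<and> card T = Suc k \<and> a \<in> T}"
      using assms(2) finite_subsets by (auto simp: subset_Diff_insert)
  qed auto
  then have "card {T. T \<subseteq> S \<and> card T = Suc k \<and> a \<in> T} = card (S - {a}) choose k"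
    using assms(1) by (simp add: bij_betw_same_card[symmetric] n_subsets)
  then show ?thesis
    using assms by simp
qed

lemma finite_treated_sets: "finite (treated_sets K KT)"
  unfolding treated_sets_def by (rule finite_subset[of _ "Pow {..<K}"]) auto

lemma card_treated_sets: "card (treated_sets K KT) = K choose KT"
  unfolding treated_sets_def using n_subsets[of "{..<K}" KT] by simp

lemma card_treated_sets_containing:
  assumes "a < K" "0 < KT"
  shows "real (card {T \<in> treated_sets K KT. a \<in> T})
           = real (card (treated_sets K KT)) * real KT / real K"
proof -
  have "{T \<in> treated_sets K KT. a \<in> T} = {T. T \<subseteq> {..<K} \<and> card T = Suc (KT - 1) \<and> a \<in> T}"
    using assms by (auto simp: treated_sets_def)
  then have "card {T \<in> treated_sets K KT. a \<in> T} = (K - 1) choose (KT - 1)"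
    using card_subsets_containing[of "{..<K}" a "KT - 1"] assms by simp
  moreover have "K * ((K - 1) choose (KT - 1)) = (K choose KT) * KT"
    using Suc_times_binomial_eq[of "K - 1" "KT - 1"] assms by simp
  ultimately show ?thesis
    using assms unfolding card_treated_sets by (simp add: field_simps flip: of_nat_mult)
qed

lemma card_treated_sets_separating:
  assumes "a < K" "b < K" "a \<noteq> b" "0 < KT" "KT \<le> K"
  shows "real (card {T \<in> treated_sets K KT. a \<in> T \<and> b \<notin> T})
           = real (card (treated_sets K KT)) * (real KT * (real K - real KT)) / (real K * (real K - 1))"
proof -
  define p where "p = real ((K - 1) choose (KT - 1))"
  define q where "q = real ((K - 2) choose (KT - 1))"
  have "{T \<in> treated_sets K KT. a \<in> T \<and> b \<notin> T}
          = {T. T \<subseteq> {..<K} - {b} \<and> card T = Suc (KT - 1) \<and> a \<in> T}"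
    using assms by (auto simp: treated_sets_def)
  then have card_eq: "real (card {T \<in> treated_sets K KT. a \<in> T \<and> b \<notin> T}) = q"
    using card_subsets_containing[of "{..<K} - {b}" a "KT - 1"] assms
    by (simp add: q_def numeral_2_eq_2)
  have "(K - KT) * ((K - 1) choose (KT - 1)) = (K - 1) * ((K - 2) choose (KT - 1))"
    using binomial_absorb_comp[of "K - 1" "KT - 1"] assms by (simp add: diff_diff_add numeral_2_eq_2)
  then have "real ((K - KT) * ((K - 1) choose (KT - 1))) = real ((K - 1) * ((K - 2) choose (KT - 1)))"
    by (rule arg_cong)
  then have absorb: "(real K - real KT) * p = (real K - 1) * q"
    using assms unfolding p_def q_def by (simp add: of_nat_diff)
  have "K * ((K - 1) choose (KT - 1)) = (K choose KT) * KT"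
    using Suc_times_binomial_eq[of "K - 1" "KT - 1"] assms by simp
  then have pascal: "real K * p = real (K choose KT) * real KT"
    unfolding p_def by (metis of_nat_mult)
  have "q * (real K * (real K - 1)) = real K * ((real K - real KT) * p)"
    by (simp add: absorb)
  also have "\<dots> = real (K choose KT) * (real KT * (real K - real KT))"
    by (simp only: mult.left_commute[of "real K"] pascal) (simp only: ac_simps)
  finally show ?thesis
    using assms unfolding card_eq card_treated_sets by (simp add: field_simps)
qed

definition dim_weight :: "nat \<Rightarrow> nat \<Rightarrow> nat \<Rightarrow> real \<Rightarrow> real" where
  "dim_weight N K KT z =
     (let NT = real N * real KT / real K in if z = 1 then 1 / NT else - 1 / (real N - NT))"

lemma tau_dim_eq_sum_dim_weight:
  assumes "\<And>i. i < N \<Longrightarrow> Z i \<in> {-1, 1}"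
  shows "tau_dim N K KT Z Y = (\<Sum>i<N. dim_weight N K KT (Z i) * Y i)"
proof -
  define NT where "NT = real N * real KT / real K"
  have "tau_dim N K KT Z Y
          = (\<Sum>i<N. (if Z i = 1 then Y i else 0) / NT)
            - (\<Sum>i<N. (if Z i = -1 then Y i else 0) / (real N - NT))"
    unfolding tau_dim_def Let_def NT_def sum_divide_distrib sum.inter_filter[OF finite_lessThan] ..
  also have "\<dots> = (\<Sum>i<N. dim_weight N K KT (Z i) * Y i)"
    unfolding sum_subtractf[symmetric]
    by (rule sum.cong) (use assms in \<open>auto simp: dim_weight_def NT_def Let_def\<close>)
  finally show ?thesis .
qed

lemma dim_weight_treated:
  "dim_weight N K KT 1 = real K / (real N * real KT)"
  by (simp add: dim_weight_def)

lemma dim_weight_control: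
  assumes "z \<noteq> 1" "KT < K"
  shows "dim_weight N K KT z = - real K / (real N * (real K - real KT))"
  using assms by (simp add: dim_weight_def Let_def field_simps)

lemma abs_dim_weight_control:
  assumes "z \<noteq> 1" "KT < K"
  shows "\<bar>dim_weight N K KT z\<bar> = real K / (real N * (real K - real KT))"
  using assms by (simp add: dim_weight_control abs_mult)

lemma sum_dim_weight_assign:
  fixes f :: "real \<Rightarrow> real"
  assumes "cl i < K" "0 < KT" "KT < K" "0 < N"
  shows "(\<Sum>T\<in>treated_sets K KT. dim_weight N K KT (assign cl T i) * f (assign cl T i))
           = real (card (treated_sets K KT)) * (f 1 - f (-1)) / real N"
proof -
  define c where "c = real (card (treated_sets K KT))"
  define p where "p = real KT / real K"
  define wT where "wT = dim_weight N K KT 1 * f 1"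
  define wC where "wC = dim_weight N K KT (-1) * f (-1)"
  have wT: "p * wT = f 1 / real N"
    using assms by (simp add: p_def wT_def dim_weight_treated)
  have wC: "(1 - p) * wC = - f (-1) / real N"
    using assms by (simp add: p_def wC_def dim_weight_control field_simps)
  have "(\<Sum>T\<in>treated_sets K KT. dim_weight N K KT (assign cl T i) * f (assign cl T i))
          = (\<Sum>T\<in>treated_sets K KT. if cl i \<in> T then wT else wC)"
    by (rule sum.cong) (auto simp: assign_def wT_def wC_def)
  also have "\<dots> = c * wC + c * p * (wT - wC)"
    using sum_if_const_eq_card[OF finite_treated_sets] card_treated_sets_containing[OF assms(1,2)]
    by (simp add: c_def p_def)
  also have "\<dots> = c * (p * wT + (1 - p) * wC)"
    by (simp add: algebra_simps)
  also have "\<dots> = c * (f 1 - f (-1)) / real N"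
    by (simp add: wT wC diff_divide_distrib[symmetric])
  finally show ?thesis
    unfolding c_def .
qed

lemma sum_abs_dim_weight_assign_diff:
  assumes "cl i < K" "cl j < K" "cl i \<noteq> cl j" "0 < KT" "KT < K" "0 < N"
  shows "(\<Sum>T\<in>treated_sets K KT. \<bar>dim_weight N K KT (assign cl T i)\<bar> * \<bar>assign cl T i - assign cl T j\<bar>)
           = real (card (treated_sets K KT)) * (2 * real K / (real N * (real K - 1)))"
proof -
  define c where "c = real (card (treated_sets K KT))"
  define p where "p = real KT * (real K - real KT) / (real K * (real K - 1))"
  define wT where "wT = 2 * \<bar>dim_weight N K KT 1\<bar>"
  define wC where "wC = 2 * \<bar>dim_weight N K KT (-1)\<bar>"
  have K: "real K - 1 > 0" "real K - real KT > 0"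
    using assms by auto
  have wT: "p * wT = 2 * (real K - real KT) / (real N * (real K - 1))"
    using assms K by (simp add: p_def wT_def dim_weight_treated field_simps)
  have wC: "p * wC = 2 * real KT / (real N * (real K - 1))"
  proof -
    define KC where "KC = real K - real KT"
    have "KC > 0"
      using K by (simp add: KC_def)
    have "p * wC = real KT * KC / (real K * (real K - 1)) * (2 * (real K / (real N * KC)))"
      using assms by (simp add: p_def wC_def KC_def abs_dim_weight_control)
    also have "\<dots> = 2 * real KT / (real N * (real K - 1))"
      using assms K \<open>KC > 0\<close> by (simp add: field_simps)
    finally show ?thesis .
  qed
  have "(\<Sum>T\<in>treated_sets K KT. \<bar>dim_weight N K KT (assign cl T i)\<bar> * \<bar>assign cl T i - assign cl T j\<bar>)
          = (\<Sum>T\<in>treated_sets K KT. (if cl i \<in> T \<and> cl j \<notin> T then wT else 0)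
                                    + (if cl j \<in> T \<and> cl i \<notin> T then wC else 0))"
    by (rule sum.cong) (auto simp: assign_def wT_def wC_def)
  also have "\<dots> = real (card {T \<in> treated_sets K KT. cl i \<in> T \<and> cl j \<notin> T}) * wT
                   + real (card {T \<in> treated_sets K KT. cl j \<in> T \<and> cl i \<notin> T}) * wC"
    by (simp add: sum.distrib sum_if_const_eq_card[OF finite_treated_sets])
  also have "\<dots> = c * (p * wT + p * wC)"
    using assms by (simp add: card_treated_sets_separating c_def p_def algebra_simps)
  also have "\<dots> = c * (2 * real K / (real N * (real K - 1)))"
    by (simp add: wT wC add_divide_distrib[symmetric] algebra_simps)
  finally show ?thesis
    unfolding c_def .
qed

definition pair_weight :: "nat \<Rightarrow> nat \<Rightarrow> (nat \<Rightarrow> nat \<Rightarrow> real) \<Rightarrow> nat \<Rightarrow> nat \<Rightarrow> nat \<Rightarrow> real" where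
  "pair_weight N M w i j s = (w i s / (\<Sum>s'<M. w i s')) * (w j s / (\<Sum>k<N. w k s))"

lemma H_clust_eq_sum_pair_weight:
  "H_clust N M w cl = (\<Sum>i<N. \<Sum>j\<in>{j \<in> {..<N}. cl j \<noteq> cl i}. \<Sum>s<M. pair_weight N M w i j s)"
  by (simp add: H_clust_def pair_weight_def)

lemma pair_weight_nonneg:
  assumes "\<And>i s. i < N \<Longrightarrow> s < M \<Longrightarrow> w i s \<ge> 0" "i < N" "j < N" "s < M"
  shows "pair_weight N M w i j s \<ge> 0"
  unfolding pair_weight_def using assms
  by (intro mult_nonneg_nonneg divide_nonneg_nonneg sum_nonneg) auto

lemma diff_exposure_eq:
  fixes Z :: "nat \<Rightarrow> real"
  assumes row: "(\<Sum>s<M. w i s) > 0" and col: "\<And>s. s < M \<Longrightarrow> (\<Sum>j<N. w j s) > 0"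
  shows "x - exposure N M w Z i = (\<Sum>s<M. \<Sum>j<N. pair_weight N M w i j s * (x - Z j))"
proof -
  define W where "W = (\<Sum>s<M. w i s)"
  have dose: "(\<Sum>j<N. w j s / (\<Sum>k<N. w k s) * (x - Z j)) = x - dose N M w Z s" if "s < M" for s
  proof -
    have "(\<Sum>j<N. w j s / (\<Sum>k<N. w k s) * (x - Z j))
            = (\<Sum>j<N. x * w j s - w j s * Z j) / (\<Sum>k<N. w k s)"
      unfolding sum_divide_distrib by (rule sum.cong) (simp_all add: algebra_simps)
    also have "\<dots> = (x * (\<Sum>j<N. w j s) - (\<Sum>j<N. w j s * Z j)) / (\<Sum>k<N. w k s)"
      by (simp add: sum_subtractf sum_distrib_left)
    also have "\<dots> = x - dose N M w Z s"
      using col[OF that] by (simp add: dose_def field_simps)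
    finally show ?thesis .
  qed
  have "(\<Sum>s<M. \<Sum>j<N. pair_weight N M w i j s * (x - Z j))
          = (\<Sum>s<M. w i s / W * (x - dose N M w Z s))"
  proof (rule sum.cong)
    fix s assume "s \<in> {..<M}"
    have "(\<Sum>j<N. pair_weight N M w i j s * (x - Z j))
            = w i s / W * (\<Sum>j<N. w j s / (\<Sum>k<N. w k s) * (x - Z j))"
      unfolding pair_weight_def W_def sum_distrib_left by (simp only: mult.assoc)
    then show "(\<Sum>j<N. pair_weight N M w i j s * (x - Z j)) = w i s / W * (x - dose N M w Z s)"
      using dose \<open>s \<in> {..<M}\<close> by simp
  qed simp
  also have "\<dots> = (\<Sum>s<M. x * w i s - w i s * dose N M w Z s) / W"
    unfolding sum_divide_distrib by (rule sum.cong) (simp_all add: algebra_simps diff_divide_distrib)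
  also have "\<dots> = (x * W - (\<Sum>s<M. w i s * dose N M w Z s)) / W"
    by (simp add: W_def sum_subtractf sum_distrib_left)
  also have "\<dots> = x - exposure N M w Z i"
    using row by (simp add: W_def exposure_def field_simps)
  finally show ?thesis ..
qed

lemma exposure_mem_interval:
  assumes w_nonneg: "\<And>i s. i < N \<Longrightarrow> s < M \<Longrightarrow> w i s \<ge> 0" and "i < N"
    and row: "(\<Sum>s<M. w i s) > 0" and col: "\<And>s. s < M \<Longrightarrow> (\<Sum>j<N. w j s) > 0"
    and Z: "\<And>j. j < N \<Longrightarrow> Z j \<in> {-1..1}"
  shows "exposure N M w Z i \<in> {-1..1}"
proof -
  have "0 \<le> (\<Sum>s<M. \<Sum>j<N. pair_weight N M w i j s * (1 - Z j))"
    using Z pair_weight_nonneg[OF w_nonneg \<open>i < N\<close>] by (intro sum_nonneg mult_nonneg_nonneg) auto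
  moreover have "(\<Sum>s<M. \<Sum>j<N. pair_weight N M w i j s * (-1 - Z j)) \<le> 0"
    using Z pair_weight_nonneg[OF w_nonneg \<open>i < N\<close>] by (intro sum_nonpos mult_nonneg_nonpos) auto
  ultimately show ?thesis
    using diff_exposure_eq[OF row col, of 1 Z] diff_exposure_eq[OF row col, of "-1" Z] by simp
qed

lemma abs_diff_exposure_le:
  assumes w_nonneg: "\<And>i s. i < N \<Longrightarrow> s < M \<Longrightarrow> w i s \<ge> 0" and "i < N"
    and row: "(\<Sum>s<M. w i s) > 0" and col: "\<And>s. s < M \<Longrightarrow> (\<Sum>j<N. w j s) > 0"
  shows "\<bar>x - exposure N M w Z i\<bar> \<le> (\<Sum>j<N. \<Sum>s<M. pair_weight N M w i j s * \<bar>x - Z j\<bar>)"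
proof -
  have "\<bar>x - exposure N M w Z i\<bar> = \<bar>\<Sum>s<M. \<Sum>j<N. pair_weight N M w i j s * (x - Z j)\<bar>"
    by (simp only: diff_exposure_eq[OF row col])
  also have "\<dots> \<le> (\<Sum>s<M. \<Sum>j<N. \<bar>pair_weight N M w i j s * (x - Z j)\<bar>)"
    by (rule order_trans[OF sum_abs], intro sum_mono sum_abs)
  also have "\<dots> = (\<Sum>j<N. \<Sum>s<M. pair_weight N M w i j s * \<bar>x - Z j\<bar>)"
    using pair_weight_nonneg[OF w_nonneg \<open>i < N\<close>] by (subst sum.swap) (simp add: abs_mult)
  finally show ?thesis .
qed

lemma abs_assign_diff_exposure_le:
  assumes w_nonneg: "\<And>i s. i < N \<Longrightarrow> s < M \<Longrightarrow> w i s \<ge> 0" and "i < N"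
    and row: "(\<Sum>s<M. w i s) > 0" and col: "\<And>s. s < M \<Longrightarrow> (\<Sum>j<N. w j s) > 0"
  shows "\<bar>assign cl T i - exposure N M w (assign cl T) i\<bar>
           \<le> (\<Sum>j\<in>{j \<in> {..<N}. cl j \<noteq> cl i}. \<Sum>s<M. pair_weight N M w i j s * \<bar>assign cl T i - assign cl T j\<bar>)"
proof -
  let ?d = "\<lambda>j. \<Sum>s<M. pair_weight N M w i j s * \<bar>assign cl T i - assign cl T j\<bar>"
  have "\<bar>assign cl T i - exposure N M w (assign cl T) i\<bar> \<le> (\<Sum>j<N. ?d j)"
    by (rule abs_diff_exposure_le[OF assms])
  also have "\<dots> = (\<Sum>j<N. if cl j \<noteq> cl i then ?d j else 0)"
    by (rule sum.cong) (auto simp: assign_def)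
  also have "\<dots> = (\<Sum>j\<in>{j \<in> {..<N}. cl j \<noteq> cl i}. ?d j)"
    by (simp only: sum.inter_filter[OF finite_lessThan])
  finally show ?thesis .
qed

lemma expected_dim_minus_tau_star:
  assumes cl: "\<And>i. i < N \<Longrightarrow> cl i < K" and "0 < KT" "KT < K" "0 < N"
  shows "expected_dim N M w K KT cl g - tau_star N g
           = (\<Sum>i<N. \<Sum>T\<in>treated_sets K KT. dim_weight N K KT (assign cl T i)
                * (g i (assign cl T i) (exposure N M w (assign cl T) i) - g i (assign cl T i) (assign cl T i)))
             / real (card (treated_sets K KT))"
proof -
  define c where "c = real (card (treated_sets K KT))"
  let ?z = "\<lambda>T i. assign cl T i"
  let ?y = "\<lambda>T i. g i (?z T i) (exposure N M w (assign cl T) i)"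
  let ?d = "\<lambda>T i. dim_weight N K KT (?z T i)"
  have "c > 0"
    using assms by (simp add: c_def card_treated_sets)
  have "c * expected_dim N M w K KT cl g = (\<Sum>T\<in>treated_sets K KT. \<Sum>i<N. ?d T i * ?y T i)"
    using \<open>c > 0\<close> by (simp add: expected_dim_def c_def tau_dim_eq_sum_dim_weight assign_def)
  also have "\<dots> = (\<Sum>i<N. \<Sum>T\<in>treated_sets K KT. ?d T i * (?y T i - g i (?z T i) (?z T i)))
                 + (\<Sum>i<N. \<Sum>T\<in>treated_sets K KT. ?d T i * g i (?z T i) (?z T i))"
    by (subst sum.swap) (simp add: sum.distrib[symmetric] algebra_simps)
  also have "(\<Sum>i<N. \<Sum>T\<in>treated_sets K KT. ?d T i * g i (?z T i) (?z T i)) = c * tau_star N g"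
  proof -
    have "(\<Sum>T\<in>treated_sets K KT. ?d T i * g i (?z T i) (?z T i)) = c * (g i 1 1 - g i (-1) (-1)) / real N"
      if "i < N" for i
      using sum_dim_weight_assign[of cl i K KT N "\<lambda>z. g i z z"] cl[OF that] assms by (simp add: c_def)
    then show ?thesis
      by (simp add: tau_star_def sum_divide_distrib sum_distrib_left)
  qed
  finally show ?thesis
    using \<open>c > 0\<close> by (simp add: c_def field_simps)
qed

lemma sum_abs_interference_bias_le:
  assumes "i < N" and cl: "\<And>j. j < N \<Longrightarrow> cl j < K" and "0 < KT" "KT < K"
    and w_nonneg: "\<And>i s. i < N \<Longrightarrow> s < M \<Longrightarrow> w i s \<ge> 0"
    and row: "(\<Sum>s<M. w i s) > 0" and col: "\<And>s. s < M \<Longrightarrow> (\<Sum>j<N. w j s) > 0"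
    and "L \<ge> 0" and lip: "\<And>z e. z \<in> {-1, 1} \<Longrightarrow> e \<in> {-1..1} \<Longrightarrow> \<bar>g i z e - g i z z\<bar> \<le> L * \<bar>z - e\<bar>"
  shows "(\<Sum>T\<in>treated_sets K KT. \<bar>dim_weight N K KT (assign cl T i)
            * (g i (assign cl T i) (exposure N M w (assign cl T) i) - g i (assign cl T i) (assign cl T i))\<bar>)
         \<le> real (card (treated_sets K KT)) * (L * (2 * real K / (real N * (real K - 1))))
            * (\<Sum>j\<in>{j \<in> {..<N}. cl j \<noteq> cl i}. \<Sum>s<M. pair_weight N M w i j s)"
proof -
  define J where "J = {j \<in> {..<N}. cl j \<noteq> cl i}"
  define \<rho> where "\<rho> = 2 * real K / (real N * (real K - 1))"
  let ?z = "\<lambda>T j. assign cl T j"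
  let ?e = "\<lambda>T. exposure N M w (assign cl T) i"
  let ?a = "\<lambda>T j. \<bar>dim_weight N K KT (?z T i)\<bar> * \<bar>?z T i - ?z T j\<bar>"
  have per_T: "\<bar>dim_weight N K KT (?z T i) * (g i (?z T i) (?e T) - g i (?z T i) (?z T i))\<bar>
                 \<le> L * (\<Sum>j\<in>J. \<Sum>s<M. pair_weight N M w i j s * ?a T j)" for T
  proof -
    have "?e T \<in> {-1..1}"
      by (rule exposure_mem_interval[OF w_nonneg \<open>i < N\<close> row col]) (auto simp: assign_def)
    then have "\<bar>g i (?z T i) (?e T) - g i (?z T i) (?z T i)\<bar> \<le> L * \<bar>?z T i - ?e T\<bar>"
      by (intro lip) (simp_all add: assign_def)
    also have "\<dots> \<le> L * (\<Sum>j\<in>J. \<Sum>s<M. pair_weight N M w i j s * \<bar>?z T i - ?z T j\<bar>)"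
      unfolding J_def
      by (intro mult_left_mono abs_assign_diff_exposure_le[OF w_nonneg \<open>i < N\<close> row col] \<open>L \<ge> 0\<close>)
    finally have "\<bar>g i (?z T i) (?e T) - g i (?z T i) (?z T i)\<bar>
                    \<le> L * (\<Sum>j\<in>J. \<Sum>s<M. pair_weight N M w i j s * \<bar>?z T i - ?z T j\<bar>)" .
    then have "\<bar>dim_weight N K KT (?z T i)\<bar> * \<bar>g i (?z T i) (?e T) - g i (?z T i) (?z T i)\<bar>
                 \<le> \<bar>dim_weight N K KT (?z T i)\<bar> * (L * (\<Sum>j\<in>J. \<Sum>s<M. pair_weight N M w i j s * \<bar>?z T i - ?z T j\<bar>))"
      by (rule mult_left_mono) simp
    then show ?thesis
      by (simp add: abs_mult sum_distrib_left ac_simps)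
  qed
  have "(\<Sum>T\<in>treated_sets K KT. \<bar>dim_weight N K KT (?z T i) * (g i (?z T i) (?e T) - g i (?z T i) (?z T i))\<bar>)
          \<le> (\<Sum>T\<in>treated_sets K KT. L * (\<Sum>j\<in>J. \<Sum>s<M. pair_weight N M w i j s * ?a T j))"
    by (intro sum_mono per_T)
  also have "\<dots> = L * (\<Sum>j\<in>J. \<Sum>s<M. pair_weight N M w i j s * (\<Sum>T\<in>treated_sets K KT. ?a T j))"
    by (simp add: sum_distrib_left sum.swap[of _ "treated_sets K KT"])
  also have "\<dots> = L * (\<Sum>j\<in>J. \<Sum>s<M. pair_weight N M w i j s * (real (card (treated_sets K KT)) * \<rho>))"
    using assms unfolding J_def \<rho>_def by (simp add: sum_abs_dim_weight_assign_diff)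
  also have "\<dots> = real (card (treated_sets K KT)) * (L * \<rho>) * (\<Sum>j\<in>J. \<Sum>s<M. pair_weight N M w i j s)"
    by (simp add: sum_distrib_left sum_distrib_right ac_simps)
  finally show ?thesis
    unfolding J_def \<rho>_def .
qed

lemma abs_expected_dim_minus_tau_star_le:
  assumes "0 < N" and cl: "\<And>i. i < N \<Longrightarrow> cl i < K" and KT: "0 < KT" "KT < K"
    and w_nonneg: "\<And>i s. i < N \<Longrightarrow> s < M \<Longrightarrow> w i s \<ge> 0"
    and w_row: "\<And>i. i < N \<Longrightarrow> (\<Sum>s<M. w i s) > 0"
    and w_col: "\<And>s. s < M \<Longrightarrow> (\<Sum>i<N. w i s) > 0"
    and "L \<ge> 0"
    and lip: "\<And>i z e. i < N \<Longrightarrow> z \<in> {-1, 1} \<Longrightarrow> e \<in> {-1..1} \<Longrightarrow> \<bar>g i z e - g i z z\<bar> \<le> L * \<bar>z - e\<bar>"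
  shows "\<bar>expected_dim N M w K KT cl g - tau_star N g\<bar>
           \<le> L * (2 * real K / (real N * (real K - 1))) * H_clust N M w cl"
proof -
  define c where "c = real (card (treated_sets K KT))"
  define bias where "bias T i = dim_weight N K KT (assign cl T i)
    * (g i (assign cl T i) (exposure N M w (assign cl T) i) - g i (assign cl T i) (assign cl T i))" for T i
  define \<rho> where "\<rho> = L * (2 * real K / (real N * (real K - 1)))"
  have "c > 0"
    using KT by (simp add: c_def card_treated_sets)
  have unit_bound: "(\<Sum>T\<in>treated_sets K KT. \<bar>bias T i\<bar>)
      \<le> c * \<rho> * (\<Sum>j\<in>{j \<in> {..<N}. cl j \<noteq> cl i}. \<Sum>s<M. pair_weight N M w i j s)" if "i < N" for i
    unfolding bias_def c_def \<rho>_def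
    by (rule sum_abs_interference_bias_le[where g = g, OF that cl KT w_nonneg w_row[OF that] w_col
          \<open>L \<ge> 0\<close> lip[OF that]])
  have "\<bar>expected_dim N M w K KT cl g - tau_star N g\<bar> = \<bar>\<Sum>i<N. \<Sum>T\<in>treated_sets K KT. bias T i\<bar> / c"
    using expected_dim_minus_tau_star[OF cl KT \<open>0 < N\<close>] by (simp add: bias_def c_def)
  also have "\<dots> \<le> (\<Sum>i<N. \<Sum>T\<in>treated_sets K KT. \<bar>bias T i\<bar>) / c"
    using \<open>c > 0\<close> by (intro divide_right_mono order_trans[OF sum_abs] sum_mono sum_abs) auto
  also have "\<dots> \<le> (\<Sum>i<N. c * \<rho> * (\<Sum>j\<in>{j \<in> {..<N}. cl j \<noteq> cl i}. \<Sum>s<M. pair_weight N M w i j s)) / c"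
    using \<open>c > 0\<close> by (intro divide_right_mono sum_mono unit_bound) auto
  also have "\<dots> = \<rho> * H_clust N M w cl"
    using \<open>c > 0\<close> by (simp add: H_clust_eq_sum_pair_weight mult.assoc flip: sum_distrib_left)
  finally show ?thesis
    unfolding \<rho>_def .
qed

lemma abs_le_scaled_distance:
  fixes v d \<Delta> B :: real
  assumes "\<Delta> > 0" "B \<ge> 0"
    and "\<bar>d\<bar> < \<Delta> \<Longrightarrow> v = 0" and "\<not> \<bar>d\<bar> < \<Delta> \<Longrightarrow> \<bar>v\<bar> \<le> B"
  shows "\<bar>v\<bar> \<le> B / \<Delta> * \<bar>d\<bar>"
proof (cases "\<bar>d\<bar> < \<Delta>")
  case True
  then show ?thesis
    using assms by simp
next
  case False
  then have "B \<le> B / \<Delta> * \<bar>d\<bar>"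
    using assms(1,2) by (simp add: field_simps mult_left_mono)
  then show ?thesis
    using assms(4) False by linarith
qed

theorem lemma4:
  fixes N M K KT :: nat and w :: "nat \<Rightarrow> nat \<Rightarrow> real" and cl :: "nat \<Rightarrow> nat"
    and g :: "nat \<Rightarrow> real \<Rightarrow> real \<Rightarrow> real" and \<Delta> B :: real
  assumes "N > 0" and "M > 0"
    and w_nonneg: "\<And>i s. i < N \<Longrightarrow> s < M \<Longrightarrow> w i s \<ge> 0"
    and w_row: "\<And>i. i < N \<Longrightarrow> (\<Sum>s<M. w i s) > 0"
    and w_col: "\<And>s. s < M \<Longrightarrow> (\<Sum>i<N. w i s) > 0"
    and bal: "balanced_clustering N K cl"
    and KT: "0 < KT" "KT < K"
    and "\<Delta> > 0" and "B \<ge> 0"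
    and g_close: "\<And>i z e. i < N \<Longrightarrow> z \<in> {-1, 1} \<Longrightarrow> e \<in> {-1..1} \<Longrightarrow>
                   \<bar>z - e\<bar> < \<Delta> \<Longrightarrow> \<bar>g i z e - g i z z\<bar> = 0"
    and g_far: "\<And>i z e. i < N \<Longrightarrow> z \<in> {-1, 1} \<Longrightarrow> e \<in> {-1..1} \<Longrightarrow>
                   \<not> \<bar>z - e\<bar> < \<Delta> \<Longrightarrow> \<bar>g i z e - g i z z\<bar> \<le> B"
  shows "\<bar>expected_dim N M w K KT cl g - tau_star N g\<bar>
           \<le> 2 * B / (real N * \<Delta>) * (real K / (real K - 1)) * H_clust N M w cl"
proof -
  have cl: "\<And>i. i < N \<Longrightarrow> cl i < K"
    using bal by (simp add: balanced_clustering_def)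
  have lip: "\<bar>g i z e - g i z z\<bar> \<le> B / \<Delta> * \<bar>z - e\<bar>"
    if "i < N" "z \<in> {-1, 1}" "e \<in> {-1..1}" for i z e
    using abs_le_scaled_distance[OF \<open>\<Delta> > 0\<close> \<open>B \<ge> 0\<close>] g_close[OF that] g_far[OF that] by simp
  have "\<bar>expected_dim N M w K KT cl g - tau_star N g\<bar>
          \<le> B / \<Delta> * (2 * real K / (real N * (real K - 1))) * H_clust N M w cl"
    using \<open>\<Delta> > 0\<close> \<open>B \<ge> 0\<close>
    by (intro abs_expected_dim_minus_tau_star_le[OF \<open>N > 0\<close> cl KT w_nonneg w_row w_col _ lip]) auto
  also have "B / \<Delta> * (2 * real K / (real N * (real K - 1))) = 2 * B / (real N * \<Delta>) * (real K / (real K - 1))"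
    by (simp add: field_simps)
  finally show ?thesis .
qed

end
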